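(* Let $\mathcal A$ be an NBA such that (1) $\sqsubseteq^{\mathrm{di}}\cap\sqsupseteq^{\mathrm{di}}=\mathrm{id}$, (2) $\sqsubseteq^{\mathrm{bw\text{-}di}}\cap\sqsupseteq^{\mathrm{bw\text{-}di}}=\mathrm{id}$, and (3) $\sqsubseteq^{\mathrm{di}}\cap\sqsubseteq^{\mathrm{bw\text{-}di}}=\mathrm{id}$. Then $\sqsubseteq^{\mathrm m}\cap\sqsupseteq^{\mathrm m}=\mathrm{id}$; in particular $\mathcal A/\!\sqsubseteq^{\mathrm m}$ is isomorphic to $\mathcal A$.
   Context: An NBA $\mathcal A=(\Sigma,Q,I,F,\delta)$ is assumed forward and backward complete. Direct simulation $\sqsubseteq^{\mathrm{di}}$: in the game from $(p_0,q_0)$, at round $i$ Spoiler picks $p_i\xrightarrow{\sigma_i}p_{i+1}$, Duplicator answers $q_i\xrightarrow{\sigma_i}q_{i+1}$; Duplicator wins if $p_i\in F\Rightarrow q_i\in F$ for all $i$. Backward direct simulation $\sqsubseteq^{\mathrm{bw\text{-}di}}$: same but with backward transitions $p_{i+1}\xrightarrow{\sigma_i}p_i$, $q_{i+1}\xrightarrow{\sigma_i}q_i$, and Duplicator wins if for all $i$, $p_i\in F\Rightarrow q_i\in F$ and $p_i\in I\Rightarrow q_i\in I$. In both cases $p\sqsubseteq q$ iff Duplicator has a winning strategy from $(p,q)$; these are preorders; $\sqsupseteq$ denotes the inverse relation. For relations $A,B$, $(x,y)\in A\circ B$ iff $\exists z$ with $(x,z)\in A$, $(z,y)\in B$. A relation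 $M\subseteq Q\times Q$ is a mediated simulation if $M\subseteq\ \sqsubseteq^{\mathrm{di}}\circ\sqsupseteq^{\mathrm{bw\text{-}di}}$ and $M\circ\sqsubseteq^{\mathrm{di}}\ \subseteq M$; $\sqsubseteq^{\mathrm m}$ is the union of all mediated simulations (itself a mediated simulation). $\mathrm{id}$ is the identity relation; quotient by a preorder merges its equivalence classes. *)

theory Defs
  imports Main
begin

text \<open>An NBA is given by alphabet S, states Q, initial states I, accepting states F
and transition relation D (triples (p, a, q) meaning p --a--> q).
Standing assumption: forward and backward complete.\<close>

definition nba :: "'a set \<Rightarrow> 'q set \<Rightarrow> 'q set \<Rightarrow> 'q set \<Rightarrow> ('q \<times> 'a \<times> 'q) set \<Rightarrow> bool" where
  "nba S Q I F D \<longleftrightarrow> finite S \<and> finite Q \<and> I \<subseteq> Q \<and> F \<subseteq> Q \<and> D \<subseteq> Q \<times> S \<times> Q"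

definition fw_complete :: "'a set \<Rightarrow> 'q set \<Rightarrow> ('q \<times> 'a \<times> 'q) set \<Rightarrow> bool" where
  "fw_complete S Q D \<longleftrightarrow> (\<forall>p\<in>Q. \<forall>a\<in>S. \<exists>q\<in>Q. (p, a, q) \<in> D)"

definition bw_complete :: "'a set \<Rightarrow> 'q set \<Rightarrow> ('q \<times> 'a \<times> 'q) set \<Rightarrow> bool" where
  "bw_complete S Q D \<longleftrightarrow> (\<forall>p\<in>Q. \<forall>a\<in>S. \<exists>q\<in>Q. (q, a, p) \<in> D)"

text \<open>Duplicator's response sequence: given Duplicator's strategy f (mapping the history of
Spoiler's moves, i.e. the list of (letter, new Spoiler state) pairs, to Duplicator's next state),
the initial state q0, Spoiler's letters sg and Spoiler's states ps.\<close>

primrec dup_play :: "(('a \<times> 'q) list \<Rightarrow> 'q) \<Rightarrow> 'q \<Rightarrow> (nat \<Rightarrow> 'a) \<Rightarrow> (nat \<Rightarrow> 'q) \<Rightarrow> nat \<Rightarrow> 'q" where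
  "dup_play f q0 sg ps 0 = q0"
| "dup_play f q0 sg ps (Suc i) = f (map (\<lambda>j. (sg j, ps (Suc j))) [0..<Suc i])"

definition di_sim :: "'q set \<Rightarrow> 'q set \<Rightarrow> ('q \<times> 'a \<times> 'q) set \<Rightarrow> ('q \<times> 'q) set" where
  "di_sim Q F D = {(p0, q0). p0 \<in> Q \<and> q0 \<in> Q \<and>
     (\<exists>f. \<forall>ps sg. ps 0 = p0 \<and> (\<forall>i. (ps i, sg i, ps (Suc i)) \<in> D) \<longrightarrow>
        (\<forall>i. let qs = dup_play f q0 sg ps in
              (qs i, sg i, qs (Suc i)) \<in> D \<and> (ps i \<in> F \<longrightarrow> qs i \<in> F)))}"

definition bw_di_sim :: "'q set \<Rightarrow> 'q set \<Rightarrow> 'q set \<Rightarrow> ('q \<times> 'a \<times> 'q) set \<Rightarrow> ('q \<times> 'q) set" where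
  "bw_di_sim Q I F D = {(p0, q0). p0 \<in> Q \<and> q0 \<in> Q \<and>
     (\<exists>f. \<forall>ps sg. ps 0 = p0 \<and> (\<forall>i. (ps (Suc i), sg i, ps i) \<in> D) \<longrightarrow>
        (\<forall>i. let qs = dup_play f q0 sg ps in
              (qs (Suc i), sg i, qs i) \<in> D \<and> (ps i \<in> F \<longrightarrow> qs i \<in> F)
              \<and> (ps i \<in> I \<longrightarrow> qs i \<in> I)))}"

definition mediated_sim :: "'q set \<Rightarrow> 'q set \<Rightarrow> 'q set \<Rightarrow> ('q \<times> 'a \<times> 'q) set \<Rightarrow> ('q \<times> 'q) set \<Rightarrow> bool" where
  "mediated_sim Q I F D M \<longleftrightarrow>
     M \<subseteq> Q \<times> Q \<and> M \<subseteq> di_sim Q F D O (bw_di_sim Q I F D)\<inverse> \<and> M O di_sim Q F D \<subseteq> M"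

definition med_sim :: "'q set \<Rightarrow> 'q set \<Rightarrow> 'q set \<Rightarrow> ('q \<times> 'a \<times> 'q) set \<Rightarrow> ('q \<times> 'q) set" where
  "med_sim Q I F D = \<Union>{M. mediated_sim Q I F D M}"

definition quot_states :: "'q set \<Rightarrow> ('q \<times> 'q) set \<Rightarrow> 'q set set" where
  "quot_states Q R = Q // (R \<inter> R\<inverse>)"

definition quot_init :: "'q set \<Rightarrow> ('q \<times> 'q) set \<Rightarrow> 'q set \<Rightarrow> 'q set set" where
  "quot_init Q R I = {C \<in> quot_states Q R. C \<inter> I \<noteq> {}}"

definition quot_acc :: "'q set \<Rightarrow> ('q \<times> 'q) set \<Rightarrow> 'q set \<Rightarrow> 'q set set" where
  "quot_acc Q R F = {C \<in> quot_states Q R. C \<inter> F \<noteq> {}}"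

definition quot_trans :: "'q set \<Rightarrow> ('q \<times> 'q) set \<Rightarrow> ('q \<times> 'a \<times> 'q) set \<Rightarrow> ('q set \<times> 'a \<times> 'q set) set" where
  "quot_trans Q R D = {(C, a, C'). C \<in> quot_states Q R \<and> C' \<in> quot_states Q R \<and>
      (\<exists>p\<in>C. \<exists>p'\<in>C'. (p, a, p') \<in> D)}"

definition nba_iso :: "'q set \<Rightarrow> 'q set \<Rightarrow> 'q set \<Rightarrow> ('q \<times> 'a \<times> 'q) set \<Rightarrow>
    'r set \<Rightarrow> 'r set \<Rightarrow> 'r set \<Rightarrow> ('r \<times> 'a \<times> 'r) set \<Rightarrow> bool" where
  "nba_iso Q I F D Q' I' F' D' \<longleftrightarrow> (\<exists>h. bij_betw h Q Q' \<and>
      (\<forall>q\<in>Q. h q \<in> I' \<longleftrightarrow> q \<in> I) \<and> (\<forall>q\<in>Q. h q \<in> F' \<longleftrightarrow> q \<in> F) \<and>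
      (\<forall>p\<in>Q. \<forall>q\<in>Q. \<forall>a. (h p, a, h q) \<in> D' \<longleftrightarrow> (p, a, q) \<in> D))"

end

theory Submission
  imports Defs
begin

text \<open>Both simulation preorders are reflexive and transitive, the latter by letting Duplicator
compose strategies. Now let \<open>p \<sqsubseteq>m q\<close> and \<open>q \<sqsubseteq>m p\<close>. The first gives a mediator \<open>x\<close> with
\<open>p \<sqsubseteq>di x\<close> and \<open>q \<sqsubseteq>bw-di x\<close>; closure of \<open>\<sqsubseteq>m\<close> under \<open>\<sqsubseteq>di\<close> on the right gives \<open>q \<sqsubseteq>m x\<close>, hence a
mediator \<open>w\<close> with \<open>q \<sqsubseteq>di w\<close> and \<open>x \<sqsubseteq>bw-di w\<close>. Then \<open>q \<sqsubseteq>bw-di w\<close> by transitivity, so \<open>q = w\<close>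
by (3), then \<open>x = q\<close> by (2), i.e. \<open>p \<sqsubseteq>di q\<close>. Symmetrically \<open>q \<sqsubseteq>di p\<close>, and \<open>p = q\<close> by (1).
A preorder whose symmetric part is the identity has singleton classes, so the quotient is an
isomorphic copy of the automaton.\<close>

definition game_sim :: "'q set \<Rightarrow> ('q \<times> 'a \<times> 'q) set \<Rightarrow> ('q \<times> 'q) set \<Rightarrow> ('q \<times> 'q) set" where
  "game_sim Q T W = {(p0, q0). p0 \<in> Q \<and> q0 \<in> Q \<and>
     (\<exists>f. \<forall>ps sg. ps 0 = p0 \<and> (\<forall>i. (ps i, sg i, ps (Suc i)) \<in> T) \<longrightarrow>
        (\<forall>i. let qs = dup_play f q0 sg ps in
              (qs i, sg i, qs (Suc i)) \<in> T \<and> (ps i, qs i) \<in> W))}"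

lemma di_sim_eq_game_sim: "di_sim Q F D = game_sim Q D {(p, q). p \<in> F \<longrightarrow> q \<in> F}"
  unfolding di_sim_def game_sim_def by (simp add: Let_def)

lemma bw_di_sim_eq_game_sim:
  "bw_di_sim Q I F D = game_sim Q {(p, a, q). (q, a, p) \<in> D}
     {(p, q). (p \<in> F \<longrightarrow> q \<in> F) \<and> (p \<in> I \<longrightarrow> q \<in> I)}"
  unfolding bw_di_sim_def game_sim_def by (simp add: Let_def)

lemma dup_play_copycat: "dup_play (\<lambda>h. snd (last h)) p sg ps i = (if i = 0 then p else ps i)"
  by (cases i) auto

lemma game_sim_refl:
  assumes "p \<in> Q" and "refl W"
  shows "(p, p) \<in> game_sim Q T W"
  unfolding game_sim_def using assms
  by (auto intro!: exI[of _ "\<lambda>h. snd (last h)"] simp: dup_play_copycat Let_def refl_on_def)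

text \<open>The second strategy is played against the answers the first strategy gives to the history.\<close>

definition comp_strategy :: "(('a \<times> 'q) list \<Rightarrow> 'q) \<Rightarrow> (('a \<times> 'q) list \<Rightarrow> 'q) \<Rightarrow> ('a \<times> 'q) list \<Rightarrow> 'q" where
  "comp_strategy f g h = g (map (\<lambda>k. (fst (h ! k), f (take (Suc k) h))) [0..<length h])"

lemma dup_play_comp_strategy:
  "dup_play (comp_strategy f g) r sg ps n = dup_play g r sg (dup_play f q sg ps) n"
proof (cases n)
  case (Suc i)
  let ?h = "map (\<lambda>j. (sg j, ps (Suc j))) [0..<Suc i]"
  have "map (\<lambda>k. (fst (?h ! k), f (take (Suc k) ?h))) [0..<Suc i]
      = map (\<lambda>j. (sg j, dup_play f q sg ps (Suc j))) [0..<Suc i]"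
    by (rule map_cong) (auto simp: take_map take_upt min_def simp del: upt_Suc)
  then show ?thesis
    by (simp only: Suc dup_play.simps comp_strategy_def length_map length_upt diff_zero)
qed simp

lemma game_simI:
  assumes "p0 \<in> Q" "q0 \<in> Q"
    and "\<And>ps sg i. ps 0 = p0 \<Longrightarrow> \<forall>i. (ps i, sg i, ps (Suc i)) \<in> T \<Longrightarrow>
      (dup_play f q0 sg ps i, sg i, dup_play f q0 sg ps (Suc i)) \<in> T \<and> (ps i, dup_play f q0 sg ps i) \<in> W"
  shows "(p0, q0) \<in> game_sim Q T W"
  unfolding game_sim_def using assms by (auto simp: Let_def)

lemma game_sim_trans:
  assumes "trans W"
  shows "trans (game_sim Q T W)"
proof (rule transI)
  fix p q r assume "(p, q) \<in> game_sim Q T W" "(q, r) \<in> game_sim Q T W"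
  then obtain f g where
    f: "\<And>ps sg. ps 0 = p \<Longrightarrow> \<forall>i. (ps i, sg i, ps (Suc i)) \<in> T \<Longrightarrow>
          \<forall>i. (dup_play f q sg ps i, sg i, dup_play f q sg ps (Suc i)) \<in> T \<and> (ps i, dup_play f q sg ps i) \<in> W"
    and g: "\<And>ps sg. ps 0 = q \<Longrightarrow> \<forall>i. (ps i, sg i, ps (Suc i)) \<in> T \<Longrightarrow>
          \<forall>i. (dup_play g r sg ps i, sg i, dup_play g r sg ps (Suc i)) \<in> T \<and> (ps i, dup_play g r sg ps i) \<in> W"
    and "p \<in> Q" "r \<in> Q"
    unfolding game_sim_def Let_def by blast
  show "(p, r) \<in> game_sim Q T W"
  proof (rule game_simI[where f = "comp_strategy f g"])
    fix ps sg i assume ps: "ps 0 = p" "\<forall>i. (ps i, sg i, ps (Suc i)) \<in> T"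
    define qs where "qs = dup_play f q sg ps"
    have qs: "\<forall>i. (qs i, sg i, qs (Suc i)) \<in> T \<and> (ps i, qs i) \<in> W"
      using f ps unfolding qs_def by blast
    moreover have "qs 0 = q" by (simp add: qs_def)
    ultimately have rs: "\<forall>i. (dup_play g r sg qs i, sg i, dup_play g r sg qs (Suc i)) \<in> T
        \<and> (qs i, dup_play g r sg qs i) \<in> W"
      using g by blast
    have comp: "dup_play (comp_strategy f g) r sg ps = dup_play g r sg qs"
      unfolding qs_def by (rule ext) (rule dup_play_comp_strategy)
    show "(dup_play (comp_strategy f g) r sg ps i, sg i,
        dup_play (comp_strategy f g) r sg ps (Suc i)) \<in> T
      \<and> (ps i, dup_play (comp_strategy f g) r sg ps i) \<in> W"
      unfolding comp using qs rs \<open>trans W\<close> by (blast dest: transD)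
  qed fact+
qed

lemma di_sim_refl: "p \<in> Q \<Longrightarrow> (p, p) \<in> di_sim Q F D"
  unfolding di_sim_eq_game_sim by (rule game_sim_refl) (auto intro: refl_onI)

lemma bw_di_sim_refl: "p \<in> Q \<Longrightarrow> (p, p) \<in> bw_di_sim Q I F D"
  unfolding bw_di_sim_eq_game_sim by (rule game_sim_refl) (auto intro: refl_onI)

lemma trans_di_sim: "trans (di_sim Q F D)"
  unfolding di_sim_eq_game_sim by (rule game_sim_trans) (auto intro: transI)

lemma trans_bw_di_sim: "trans (bw_di_sim Q I F D)"
  unfolding bw_di_sim_eq_game_sim by (rule game_sim_trans) (auto intro: transI)

lemma mediated_sim_Union:
  assumes "\<And>M. M \<in> \<M> \<Longrightarrow> mediated_sim Q I F D M"
  shows "mediated_sim Q I F D (\<Union>\<M>)"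
  using assms unfolding mediated_sim_def by blast

lemma mediated_sim_med_sim: "mediated_sim Q I F D (med_sim Q I F D)"
  unfolding med_sim_def by (rule mediated_sim_Union) simp

lemma mediated_sim_di_sim: "mediated_sim Q I F D (di_sim Q F D)"
  unfolding mediated_sim_def
proof (intro conjI)
  show sub: "di_sim Q F D \<subseteq> Q \<times> Q"
    unfolding di_sim_def by blast
  show "di_sim Q F D \<subseteq> di_sim Q F D O (bw_di_sim Q I F D)\<inverse>"
  proof (rule subrelI)
    fix p q assume "(p, q) \<in> di_sim Q F D"
    moreover from this have "(q, q) \<in> bw_di_sim Q I F D"
      using sub by (blast intro: bw_di_sim_refl)
    ultimately show "(p, q) \<in> di_sim Q F D O (bw_di_sim Q I F D)\<inverse>" by blast
  qed
  show "di_sim Q F D O di_sim Q F D \<subseteq> di_sim Q F D"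
    using trans_di_sim by (rule trans_O_subset)
qed

lemma di_sim_subset_med_sim: "di_sim Q F D \<subseteq> med_sim Q I F D"
  unfolding med_sim_def by (rule Union_upper) (simp add: mediated_sim_di_sim)

lemma mediated_sim_sym_imp_di_sim:
  assumes M: "mediated_sim Q I F D M"
    and bw_antisym: "bw_di_sim Q I F D \<inter> (bw_di_sim Q I F D)\<inverse> = Id_on Q"
    and di_bw_antisym: "di_sim Q F D \<inter> bw_di_sim Q I F D = Id_on Q"
    and "(p, q) \<in> M" "(q, p) \<in> M"
  shows "(p, q) \<in> di_sim Q F D"
proof -
  have mediator: "M \<subseteq> di_sim Q F D O (bw_di_sim Q I F D)\<inverse>"
    and closed: "M O di_sim Q F D \<subseteq> M"
    using M unfolding mediated_sim_def by auto
  obtain x where px: "(p, x) \<in> di_sim Q F D" and qx: "(q, x) \<in> bw_di_sim Q I F D"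
    using mediator \<open>(p, q) \<in> M\<close> by blast
  have "(q, x) \<in> M" using closed \<open>(q, p) \<in> M\<close> px by blast
  then obtain w where qw: "(q, w) \<in> di_sim Q F D" and xw: "(x, w) \<in> bw_di_sim Q I F D"
    using mediator by blast
  have "(q, w) \<in> bw_di_sim Q I F D"
    using trans_bw_di_sim qx xw by (rule transD)
  with qw have "(q, w) \<in> Id_on Q"
    unfolding di_bw_antisym[symmetric] by (rule IntI)
  then have "w = q" by (rule Id_onE) simp
  with qx xw have "(q, x) \<in> Id_on Q"
    unfolding bw_antisym[symmetric] by blast
  then have "x = q" by (rule Id_onE) simp
  with px show ?thesis by simp
qed

lemma nba_iso_quot_if_antisym:
  assumes "R \<inter> R\<inverse> = Id_on Q"
  shows "nba_iso Q I F D (quot_states Q R) (quot_init Q R I) (quot_acc Q R F) (quot_trans Q R D)"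
proof -
  have states: "quot_states Q R = (\<lambda>q. {q}) ` Q"
    unfolding quot_states_def assms quotient_def by auto
  have "bij_betw (\<lambda>q. {q}) Q (quot_states Q R)"
    unfolding states by (simp add: bij_betw_def inj_on_def)
  then show ?thesis
    unfolding nba_iso_def
    by (intro exI[of _ "\<lambda>q. {q}"]) (auto simp: quot_init_def quot_acc_def quot_trans_def states)
qed

theorem lemma7p2:
  fixes S :: "'a set" and Q I F :: "'q set" and D :: "('q \<times> 'a \<times> 'q) set"
  assumes "nba S Q I F D"
    and "fw_complete S Q D" and "bw_complete S Q D"
    and "di_sim Q F D \<inter> (di_sim Q F D)\<inverse> = Id_on Q"
    and "bw_di_sim Q I F D \<inter> (bw_di_sim Q I F D)\<inverse> = Id_on Q"
    and "di_sim Q F D \<inter> bw_di_sim Q I F D = Id_on Q"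
  shows "med_sim Q I F D \<inter> (med_sim Q I F D)\<inverse> = Id_on Q
    \<and> nba_iso Q I F D
        (quot_states Q (med_sim Q I F D)) (quot_init Q (med_sim Q I F D) I)
        (quot_acc Q (med_sim Q I F D) F) (quot_trans Q (med_sim Q I F D) D)"
proof -
  let ?M = "med_sim Q I F D"
  have "?M \<inter> ?M\<inverse> \<subseteq> di_sim Q F D \<inter> (di_sim Q F D)\<inverse>"
    using mediated_sim_sym_imp_di_sim[OF mediated_sim_med_sim assms(5,6)] by blast
  moreover have "Id_on Q \<subseteq> ?M \<inter> ?M\<inverse>"
    using di_sim_refl[of _ Q F D] di_sim_subset_med_sim[of Q F D I] by auto
  ultimately have "?M \<inter> ?M\<inverse> = Id_on Q"
    using assms(4) by blast
  then show ?thesis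
    using nba_iso_quot_if_antisym by blast
qed

end
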